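(* Let $(\lambda_n)_{n\in\mathbb{N}}$ be a sequence of complex numbers with $\sum_{n=0}^{\infty}|\lambda_n|<\infty$. Let $r\in(0,1)$, $L\in\mathbb{C}$, and let $(x_n)_{n\in\mathbb{N}}$ be a complex-valued sequence such that $\lim_{N\to\infty}\mathbb{E}^{\mathrm{Bin}(r)}_{n\le N}x_n=L$. Then \[ \lim_{N\to\infty}\mathbb{E}^{\mathrm{Bin}(r)}_{n\le N}\left(\sum_{k=0}^{n}\lambda_k x_{n-k}\right)=L\cdot\sum_{n=0}^{\infty}\lambda_n . \]
   Context: $\mathbb{N}=\{0,1,2,\dots\}$. For $r\in(0,1)$, a complex sequence $(y_n)_{n\in\mathbb{N}}$ and $N\in\mathbb{N}$, the $N$-th $r$-binomial average is $\mathbb{E}^{\mathrm{Bin}(r)}_{n\le N}y_n=\sum_{n=0}^{N}\binom{N}{n}r^n(1-r)^{N-n}y_n$. In the claim, the averaged sequence is $y_n=\sum_{k=0}^{n}\lambda_k x_{n-k}$. *)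

theory Defs
  imports "HOL-Analysis.Analysis"
begin

definition bin_avg :: "real \<Rightarrow> (nat \<Rightarrow> complex) \<Rightarrow> nat \<Rightarrow> complex" where
  "bin_avg r y N = (\<Sum>n=0..N. of_real (real (N choose n) * r ^ n * (1 - r) ^ (N - n)) * y n)"

end

theory Submission
  imports Defs
begin

text \<open>
  Binomial averaging is compatible with shifts: by Pascal's rule the averages of a sequence
  delayed by k+1 steps satisfy the recurrence  a(N+1) = (1-r) a(N) + r b(N),  where b are the
  averages of the sequence delayed by k steps.  Such a convex recurrence preserves bounds and
  limits, so by induction on k all delayed averages are bounded by a common constant and tend
  to L.  The averages of the convolution are the lam-weighted sums of the delayed averages, and
  Tannery's theorem (dominated convergence for series, with dominating sequence |lam k| M)
  lets the limit pass through the sum.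
\<close>

lemma convex_recurrence_estimate:
  fixes a b :: "nat \<Rightarrow> 'a::real_normed_vector"
  assumes "0 \<le> r" "r \<le> 1"
    and rec: "\<And>N. a (Suc N) = (1 - r) *\<^sub>R a N + r *\<^sub>R b N"
    and bound: "\<And>N. N \<ge> N0 \<Longrightarrow> norm (b N) \<le> M"
  shows "norm (a (N0 + k)) \<le> (1 - r) ^ k * norm (a N0) + (1 - (1 - r) ^ k) * M"
proof (induction k)
  case (Suc k)
  have "norm (a (N0 + Suc k)) \<le> (1 - r) * norm (a (N0 + k)) + r * norm (b (N0 + k))"
    using norm_triangle_ineq[of "(1 - r) *\<^sub>R a (N0 + k)" "r *\<^sub>R b (N0 + k)"] assms(1,2)
    by (simp add: rec)
  also have "\<dots> \<le> (1 - r) * ((1 - r) ^ k * norm (a N0) + (1 - (1 - r) ^ k) * M) + r * M"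
    using assms(1,2) Suc.IH bound[of "N0 + k"] by (intro add_mono mult_left_mono) auto
  finally show ?case
    by (simp add: algebra_simps)
qed simp

lemma convex_recurrence_bounded:
  fixes a b :: "nat \<Rightarrow> 'a::real_normed_vector"
  assumes "0 \<le> r" "r \<le> 1"
    and "\<And>N. a (Suc N) = (1 - r) *\<^sub>R a N + r *\<^sub>R b N"
    and "norm (a 0) \<le> M" "\<And>N. norm (b N) \<le> M"
  shows "norm (a N) \<le> M"
proof -
  have "norm (a N) \<le> (1 - r) ^ N * norm (a 0) + (1 - (1 - r) ^ N) * M"
    using convex_recurrence_estimate[of r a b 0 M N] assms by simp
  also have "\<dots> \<le> (1 - r) ^ N * M + (1 - (1 - r) ^ N) * M"
    using assms(2,4) by (simp add: mult_left_mono)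
  finally show ?thesis
    by (simp add: algebra_simps)
qed

lemma convex_recurrence_tendsto:
  fixes a b :: "nat \<Rightarrow> 'a::real_normed_vector"
  assumes "0 < r" "r \<le> 1"
    and rec: "\<And>N. a (Suc N) = (1 - r) *\<^sub>R a N + r *\<^sub>R b N"
    and b: "b \<longlonglongrightarrow> L"
  shows "a \<longlonglongrightarrow> L"
proof (rule LIMSEQ_I)
  fix e :: real
  assume "0 < e"
  then obtain N0 where N0: "\<And>N. N \<ge> N0 \<Longrightarrow> norm (b N - L) \<le> e / 2"
    using LIMSEQ_D[OF b, of "e / 2"] by (auto intro: less_imp_le)
  have rec_L: "a (Suc N) - L = (1 - r) *\<^sub>R (a N - L) + r *\<^sub>R (b N - L)" for N
    by (simp add: rec algebra_simps)
  have estimate: "norm (a (N0 + k) - L) \<le> (1 - r) ^ k * norm (a N0 - L) + e / 2" for k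
  proof -
    have "norm (a (N0 + k) - L) \<le> (1 - r) ^ k * norm (a N0 - L) + (1 - (1 - r) ^ k) * (e / 2)"
      using convex_recurrence_estimate[of r "\<lambda>N. a N - L" "\<lambda>N. b N - L" N0 "e / 2" k]
        assms(1,2) rec_L N0 by simp
    also have "(1 - (1 - r) ^ k) * (e / 2) \<le> e / 2"
      using assms(1,2) \<open>0 < e\<close> by (simp add: mult_left_le_one_le)
    finally show ?thesis
      by simp
  qed
  have "(\<lambda>k. (1 - r) ^ k * norm (a N0 - L)) \<longlonglongrightarrow> 0"
    using assms(1,2) by (intro tendsto_mult_left_zero LIMSEQ_power_zero) auto
  then have "eventually (\<lambda>k. (1 - r) ^ k * norm (a N0 - L) < e / 2) sequentially"
    using \<open>0 < e\<close> by (intro order_tendstoD) auto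
  then obtain K where K: "\<And>k. k \<ge> K \<Longrightarrow> (1 - r) ^ k * norm (a N0 - L) < e / 2"
    unfolding eventually_sequentially by auto
  show "\<exists>n0. \<forall>n\<ge>n0. norm (a n - L) < e"
  proof (intro exI allI impI)
    fix n
    assume "n \<ge> N0 + K"
    then show "norm (a n - L) < e"
      using estimate[of "n - N0"] K[of "n - N0"] by force
  qed
qed

definition delay :: "nat \<Rightarrow> (nat \<Rightarrow> 'a::zero) \<Rightarrow> nat \<Rightarrow> 'a" where
  "delay k x n = (if k \<le> n then x (n - k) else 0)"

lemma delay_0 [simp]: "delay 0 x = x"
  by (rule ext) (simp add: delay_def)

lemma delay_Suc_0 [simp]: "delay (Suc k) x 0 = 0"
  by (simp add: delay_def)

lemma delay_Suc_Suc: "(\<lambda>n. delay (Suc k) x (Suc n)) = delay k x"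
  by (rule ext) (simp add: delay_def)

lemma bin_avg_0 [simp]: "bin_avg r y 0 = y 0"
  by (simp add: bin_avg_def)

lemma bin_avg_Suc:
  "bin_avg r y (Suc N) = (1 - r) *\<^sub>R bin_avg r y N + r *\<^sub>R bin_avg r (\<lambda>n. y (Suc n)) N"
proof -
  define g where "g n = of_real (real (N choose n) * r ^ n * (1 - r) ^ (N - n)) * y n" for n
  define h where "h n = of_real (real (N choose n) * r ^ n * (1 - r) ^ (N - n)) * y (Suc n)" for n
  have avg_g: "bin_avg r y N = g 0 + (\<Sum>n\<le>N. g (Suc n))"
  proof -
    have "bin_avg r y N = (\<Sum>n\<le>Suc N. g n)"
      by (simp add: bin_avg_def g_def atLeast0AtMost)
    then show ?thesis
      by (simp only: sum.atMost_Suc_shift)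
  qed
  have avg_h: "bin_avg r (\<lambda>n. y (Suc n)) N = (\<Sum>n\<le>N. h n)"
    by (simp add: bin_avg_def h_def atLeast0AtMost)
  have pascal: "of_real (real (Suc N choose Suc n) * r ^ Suc n * (1 - r) ^ (Suc N - Suc n)) * y (Suc n)
      = of_real (1 - r) * g (Suc n) + of_real r * h n" if "n \<le> N" for n
  proof (cases "n = N")
    case False
    then have "N - n = Suc (N - Suc n)"
      using that by simp
    then show ?thesis
      by (simp add: g_def h_def algebra_simps)
  qed (simp add: g_def h_def)
  have "bin_avg r y (Suc N) = of_real ((1 - r) ^ Suc N) * y 0
      + (\<Sum>n\<le>N. of_real (1 - r) * g (Suc n) + of_real r * h n)"
    unfolding bin_avg_def atLeast0AtMost sum.atMost_Suc_shift
    using pascal by (simp del: binomial_Suc_Suc)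
  also have "\<dots> = of_real (1 - r) * (g 0 + (\<Sum>n\<le>N. g (Suc n))) + of_real r * (\<Sum>n\<le>N. h n)"
    by (simp add: sum.distrib sum_distrib_left distrib_left g_def)
  finally show ?thesis
    by (simp add: avg_g avg_h scaleR_conv_of_real)
qed

lemma bin_avg_delay_Suc:
  "bin_avg r (delay (Suc k) x) (Suc N)
     = (1 - r) *\<^sub>R bin_avg r (delay (Suc k) x) N + r *\<^sub>R bin_avg r (delay k x) N"
  by (simp add: bin_avg_Suc delay_Suc_Suc)

lemma bin_avg_convolution:
  fixes lam x :: "nat \<Rightarrow> complex"
  shows "bin_avg r (\<lambda>n. \<Sum>k=0..n. lam k * x (n - k)) N = (\<Sum>k\<le>N. lam k * bin_avg r (delay k x) N)"
proof -
  define w where "w n = (of_real (real (N choose n) * r ^ n * (1 - r) ^ (N - n)) :: complex)" for n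
  have "(\<Sum>k=0..n. lam k * x (n - k)) = (\<Sum>k\<le>N. lam k * delay k x n)" if "n \<le> N" for n
    using that by (intro sum.mono_neutral_cong_left) (auto simp: delay_def)
  then have "bin_avg r (\<lambda>n. \<Sum>k=0..n. lam k * x (n - k)) N = (\<Sum>n\<le>N. w n * (\<Sum>k\<le>N. lam k * delay k x n))"
    by (simp add: bin_avg_def w_def atLeast0AtMost)
  also have "\<dots> = (\<Sum>k\<le>N. lam k * (\<Sum>n\<le>N. w n * delay k x n))"
    unfolding sum_distrib_left by (subst sum.swap) (simp add: mult.left_commute)
  finally show ?thesis
    by (simp add: bin_avg_def w_def atLeast0AtMost)
qed

lemma bin_avg_delay_bounded:
  assumes "0 \<le> r" "r \<le> 1" "\<And>N. norm (bin_avg r x N) \<le> M"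
  shows "norm (bin_avg r (delay k x) N) \<le> M"
proof (induction k arbitrary: N)
  case (Suc k)
  have "0 \<le> M"
    using assms(3)[of 0] norm_ge_zero order_trans by blast
  show ?case
    by (rule convex_recurrence_bounded[where r = r and b = "bin_avg r (delay k x)"])
      (use assms(1,2) bin_avg_delay_Suc Suc.IH \<open>0 \<le> M\<close> in simp_all)
qed (simp add: assms(3))

lemma bin_avg_delay_tendsto:
  assumes "0 < r" "r \<le> 1" "(\<lambda>N. bin_avg r x N) \<longlonglongrightarrow> L"
  shows "(\<lambda>N. bin_avg r (delay k x) N) \<longlonglongrightarrow> L"
proof (induction k)
  case (Suc k)
  show ?case
    by (rule convex_recurrence_tendsto[where r = r and b = "bin_avg r (delay k x)"])
      (use assms(1,2) bin_avg_delay_Suc Suc.IH in simp_all)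
qed (simp add: assms(3))

lemma tendsto_sum_atMost_dominated:
  fixes f :: "nat \<Rightarrow> nat \<Rightarrow> 'a::{real_normed_algebra, banach}"
  assumes lim: "\<And>k. (\<lambda>N. f k N) \<longlonglongrightarrow> l k"
    and bound: "\<And>k N. norm (f k N) \<le> M k"
    and "summable M"
  shows "(\<lambda>N. \<Sum>k\<le>N. f k N) \<longlonglongrightarrow> (\<Sum>k. l k)"
proof -
  define g where "g k N = (if k \<le> N then f k N else 0)" for k N
  have "(\<lambda>N. \<Sum>k. g k N) \<longlonglongrightarrow> (\<Sum>k. l k)"
  proof (rule tannerys_theorem[THEN conjunct2, THEN conjunct2])
    show "(\<lambda>N. g k N) \<longlonglongrightarrow> l k" for k
    proof (rule Lim_transform_eventually[OF lim])
      show "\<forall>\<^sub>F N in sequentially. f k N = g k N"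
        unfolding eventually_sequentially g_def by auto
    qed
    show "\<forall>\<^sub>F (k, N) in at_top \<times>\<^sub>F sequentially. norm (g k N) \<le> M k"
      using bound order_trans[OF norm_ge_zero bound]
      by (intro always_eventually) (simp add: g_def)
  qed (use \<open>summable M\<close> in auto)
  moreover have "(\<Sum>k. g k N) = (\<Sum>k\<le>N. f k N)" for N
    by (subst suminf_finite[of "{..N}"]) (auto simp: g_def)
  ultimately show ?thesis
    by simp
qed

theorem mainTheorem1:
  fixes lam x :: "nat \<Rightarrow> complex" and r :: real and L :: complex
  assumes "summable (\<lambda>n. norm (lam n))"
    and "0 < r" and "r < 1"
    and "(\<lambda>N. bin_avg r x N) \<longlonglongrightarrow> L"
  shows "(\<lambda>N. bin_avg r (\<lambda>n. \<Sum>k=0..n. lam k * x (n - k)) N) \<longlonglongrightarrow> L * (\<Sum>n. lam n)"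
proof -
  obtain M where M: "\<And>N. norm (bin_avg r x N) \<le> M"
    using convergent_imp_Bseq[OF convergentI[OF assms(4)]] unfolding Bseq_def by auto
  have "(\<lambda>N. \<Sum>k\<le>N. lam k * bin_avg r (delay k x) N) \<longlonglongrightarrow> (\<Sum>k. lam k * L)"
  proof (rule tendsto_sum_atMost_dominated)
    show "(\<lambda>N. lam k * bin_avg r (delay k x) N) \<longlonglongrightarrow> lam k * L" for k
      using bin_avg_delay_tendsto assms(2-4) by (intro tendsto_mult_left) auto
    show "norm (lam k * bin_avg r (delay k x) N) \<le> norm (lam k) * M" for k N
      using bin_avg_delay_bounded[of r x M k N] assms(2,3) M
      by (simp add: norm_mult mult_left_mono)
    show "summable (\<lambda>k. norm (lam k) * M)"
      using assms(1) by (rule summable_mult2)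
  qed
  moreover have "(\<Sum>k. lam k * L) = L * (\<Sum>n. lam n)"
    using suminf_mult2[OF summable_norm_cancel[OF assms(1)], of L] by (simp add: mult.commute)
  ultimately show ?thesis
    by (simp add: bin_avg_convolution)
qed

end
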